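(* Let $(\mathbf X,\mathbf Y)$ be a general correlated source which is uniformly integrable and satisfies the conditional strong converse property $\underline H(\mathbf X|\mathbf Y)=\overline H(\mathbf X|\mathbf Y)$. Then the limit $H(\mathbf X|\mathbf Y)=\lim_{n\to\infty}\frac1nH(X^n|Y^n)$ exists, and for any $\varepsilon\in(0,1)$, \[\lim_{n\to\infty}\frac1n\overline H_s^\varepsilon(X^n|Y^n)=H(\mathbf X|\mathbf Y).\]
   Context: A general correlated source $(\mathbf X,\mathbf Y)=\{(X^n,Y^n)\}_{n\ge1}$ is an arbitrary sequence of pairs of random variables on $\mathcal X^n\times\mathcal Y^n$, $\mathcal X,\mathcal Y$ finite or countably infinite (no structural assumptions; marginal probabilities positive). Logs base 2. Uniformly integrable: $Z_n=\frac1n\log\frac1{P_{X^n|Y^n}(X^n|Y^n)}$ satisfies $\lim_{u\to\infty}\sup_n\sum_{z:|z|\ge u}P_{Z_n}(z)|z|=0$. $\overline H(\mathbf X|\mathbf Y)=\inf\{\alpha:\lim_n\Pr\{Z_n>\alpha\}=0\}$, $\underline H(\mathbf X|\mathbf Y)=\sup\{\beta:\lim_n\Pr\{Z_n<\beta\}=0\}$. For $x^n$ and $\varepsilon\in(0,1]$, $\overline h^\varepsilon(x^n)=\inf\{a\in\mathbb R:\sum_{y^n:\log(1/P_{X^n|Y^n}(x^n|y^n))>a}P_{Y^n|X^n}(y^n|x^n)\le\varepsilon\}$ and $\overline H_s^\varepsilon(X^n|Y^n)=\sum_{x^n}P_{X^n}(x^n)\overline h^\varepsilon(x^n)$. *)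

theory Defs
  imports "HOL-Probability.Probability"
begin

text \<open>A general correlated source: for each n a joint distribution P n of (X^n, Y^n)
  on sequences of length n over countable alphabets 'a and 'b.\<close>

definition general_source :: "(nat \<Rightarrow> ('a list \<times> 'b list) pmf) \<Rightarrow> bool" where
  "general_source P \<longleftrightarrow> (\<forall>n. set_pmf (P n) \<subseteq> {(x, y). length x = n \<and> length y = n})"

definition pX :: "('a \<times> 'b) pmf \<Rightarrow> 'a \<Rightarrow> real" where
  "pX Q x = pmf (map_pmf fst Q) x"

definition pY :: "('a \<times> 'b) pmf \<Rightarrow> 'b \<Rightarrow> real" where
  "pY Q y = pmf (map_pmf snd Q) y"

definition condXY :: "('a \<times> 'b) pmf \<Rightarrow> 'a \<Rightarrow> 'b \<Rightarrow> real" where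
  "condXY Q x y = pmf Q (x, y) / pY Q y"

definition condYX :: "('a \<times> 'b) pmf \<Rightarrow> 'b \<Rightarrow> 'a \<Rightarrow> real" where
  "condYX Q y x = pmf Q (x, y) / pX Q x"

definition Zn :: "(nat \<Rightarrow> ('a \<times> 'b) pmf) \<Rightarrow> nat \<Rightarrow> ('a \<times> 'b) \<Rightarrow> real" where
  "Zn P n = (\<lambda>(x, y). (1 / real n) * log 2 (1 / condXY (P n) x y))"

text \<open>Uniform integrability: lim_{u\<rightarrow>\<infinity>} sup_n \<Sum>_{|z|\<ge>u} P_{Z_n}(z)|z| = 0
  (the sum over z is the (possibly infinite) expectation of |Z_n| on {|Z_n| \<ge> u}).\<close>
definition uniformly_integrable :: "(nat \<Rightarrow> ('a \<times> 'b) pmf) \<Rightarrow> bool" where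
  "uniformly_integrable P \<longleftrightarrow>
     ((\<lambda>u::real. SUP n\<in>{1..}. \<integral>\<^sup>+ z. ennreal (\<bar>z\<bar> * indicator {z. \<bar>z\<bar> \<ge> u} z)
                                    \<partial>measure_pmf (map_pmf (Zn P n) (P n)))
        \<longlongrightarrow> 0) at_top"

definition spec_sup_cond_entropy :: "(nat \<Rightarrow> ('a \<times> 'b) pmf) \<Rightarrow> ereal" where
  "spec_sup_cond_entropy P =
     Inf {ereal \<alpha> | \<alpha>. (\<lambda>n. measure_pmf.prob (P n) {\<omega>. Zn P n \<omega> > \<alpha>}) \<longlonglongrightarrow> 0}"

definition spec_inf_cond_entropy :: "(nat \<Rightarrow> ('a \<times> 'b) pmf) \<Rightarrow> ereal" where
  "spec_inf_cond_entropy P =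
     Sup {ereal \<beta> | \<beta>. (\<lambda>n. measure_pmf.prob (P n) {\<omega>. Zn P n \<omega> < \<beta>}) \<longlonglongrightarrow> 0}"

definition cond_entropy :: "('a \<times> 'b) pmf \<Rightarrow> real" where
  "cond_entropy Q = measure_pmf.expectation Q (\<lambda>(x, y). log 2 (1 / condXY Q x y))"

definition hbar :: "real \<Rightarrow> ('a \<times> 'b) pmf \<Rightarrow> 'a \<Rightarrow> real" where
  "hbar \<epsilon> Q x = Inf {a. (\<Sum>\<^sub>\<infinity> y\<in>{y. log 2 (1 / condXY Q x y) > a}. condYX Q y x) \<le> \<epsilon>}"

definition smooth_Hs :: "real \<Rightarrow> ('a \<times> 'b) pmf \<Rightarrow> real" where
  "smooth_Hs \<epsilon> Q = (\<Sum>\<^sub>\<infinity> x. pX Q x * hbar \<epsilon> Q x)"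

end

theory Submission
  imports Defs
begin

text \<open>Write L = log 1/P_{X|Y}(X^n|Y^n), so that Z_n = L/n, H(X^n|Y^n) = E L, and
  hbar(x) is the least b whose conditional tail P(L > b | X^n = x) is at most \<epsilon>.
  Both normalized quantities are squeezed between thresholds of Z_n.  If the tail at b exceeds
  \<epsilon> only on a set of "heavy" x, then hbar \<le> b off that set, while on it the Markov inequality
  bounds P_X(x) hbar(x) by the mass of L in the slice of x divided by \<epsilon>; the heavy set has
  probability at most P(L > b)/\<epsilon>, so its contribution is at most the uniform-integrability tail
  E[L; L \<ge> c] plus c P(L > b)/\<epsilon>.  Conversely hbar(x) \<ge> b whenever the tail exceeds \<epsilon>, which
  fails on a set of probability at most P(L \<le> b)/(1 - \<epsilon>).  Under the strong converse property
  Z_n concentrates at H, the common value of the spectral entropies, so taking b = n t with t close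
  to H and c = n u with u large makes all error terms vanish.  Uniform integrability also bounds
  E Z_n, which keeps H finite.\<close>

lemma infsum_nonneg_eq_nn_integral:
  fixes f :: "'a \<Rightarrow> real"
  assumes nonneg: "\<And>x. x \<in> A \<Longrightarrow> 0 \<le> f x"
  shows "infsum f A = enn2real (\<integral>\<^sup>+x. ennreal (f x) \<partial>count_space A)"
proof (cases "f summable_on A")
  case True
  then have "(\<lambda>x. norm (f x)) summable_on A"
    by (rule summable_on_cong[THEN iffD1, rotated]) (simp add: nonneg)
  then have "Infinite_Sum.abs_summable_on f A" by simp
  then have abs: "Infinite_Set_Sum.abs_summable_on f A"
    using abs_summable_equivalent by blast
  have "(\<integral>\<^sup>+x. ennreal (f x) \<partial>count_space A) = ennreal (infsetsum f A)"
    using abs nonneg by (rule nn_integral_conv_infsetsum)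
  then show ?thesis
    using abs nonneg by (simp add: infsetsum_infsum infsum_nonneg)
next
  case False
  have "(\<integral>\<^sup>+x. ennreal (f x) \<partial>count_space A) = \<infinity>"
  proof (rule ccontr)
    assume "(\<integral>\<^sup>+x. ennreal (f x) \<partial>count_space A) \<noteq> \<infinity>"
    moreover have "(\<integral>\<^sup>+x. ennreal (norm (f x)) \<partial>count_space A) = (\<integral>\<^sup>+x. ennreal (f x) \<partial>count_space A)"
      by (rule nn_integral_cong) (simp add: nonneg)
    ultimately have "integrable (count_space A) f"
      by (intro integrableI_bounded) (auto simp: top.not_eq_extremum)
    then have "Infinite_Set_Sum.abs_summable_on f A" by (simp add: abs_summable_on_def)
    then have "Infinite_Sum.abs_summable_on f A" using abs_summable_equivalent by blast
    then have "(\<lambda>x. norm (f x)) summable_on A" by simp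
    then have "f summable_on A"
      by (rule summable_on_cong[THEN iffD1, rotated]) (simp add: nonneg)
    with False show False by simp
  qed
  then show ?thesis using False by (simp add: infsum_not_exists)
qed

definition cond_info :: "('a \<times> 'b) pmf \<Rightarrow> 'a \<times> 'b \<Rightarrow> real" where
  "cond_info Q = (\<lambda>(x, y). log 2 (1 / condXY Q x y))"

lemma pmf_le_pY: "pmf Q (x, y) \<le> pY Q y"
proof -
  have "pmf Q (x, y) = measure Q {(x, y)}" by (simp add: measure_pmf_single)
  also have "\<dots> \<le> measure Q (snd -` {y})"
    by (rule measure_pmf.finite_measure_mono) auto
  also have "\<dots> = pY Q y" by (simp add: pY_def pmf_map)
  finally show ?thesis .
qed

lemma cond_info_nonneg: "0 \<le> cond_info Q \<omega>"
proof -
  obtain x y where \<omega>: "\<omega> = (x, y)" by (cases \<omega>)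
  show ?thesis
  proof (cases "pmf Q (x, y) = 0")
    case True then show ?thesis by (simp add: \<omega> cond_info_def condXY_def log_def)
  next
    case False
    then have "0 < pmf Q (x, y)" using pmf_nonneg[of Q "(x, y)"] by linarith
    with pmf_le_pY[of Q x y] have "0 < condXY Q x y" "condXY Q x y \<le> 1"
      by (auto simp: condXY_def field_simps)
    then show ?thesis by (simp add: \<omega> cond_info_def)
  qed
qed

lemma pX_nonneg [simp]: "0 \<le> pX Q x"
  by (simp add: pX_def)

lemma ennreal_pX_eq_nn_integral:
  "ennreal (pX Q x) = (\<integral>\<^sup>+y. ennreal (pmf Q (x, y)) \<partial>count_space UNIV)"
proof -
  have "ennreal (pX Q x) = (\<integral>\<^sup>+\<omega>. ennreal (pmf Q \<omega>) * indicator (fst -` {x}) \<omega> \<partial>count_space UNIV)"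
    unfolding pX_def ennreal_pmf_map by (rule nn_integral_measure_pmf)
  also have "\<dots> = (\<integral>\<^sup>+x'. \<integral>\<^sup>+y. ennreal (pmf Q (x', y)) * indicator (fst -` {x}) (x', y)
      \<partial>count_space UNIV \<partial>count_space UNIV)"
    by (rule nn_integral_fst_count_space[symmetric])
  also have "\<dots> = (\<integral>\<^sup>+x'. (\<integral>\<^sup>+y. ennreal (pmf Q (x', y)) \<partial>count_space UNIV) * indicator {x} x'
      \<partial>count_space UNIV)"
    by (rule nn_integral_cong) (auto split: split_indicator)
  finally show ?thesis by simp
qed

lemma nn_integral_pmf_fst_factor:
  "(\<integral>\<^sup>+\<omega>. ennreal (pmf Q \<omega>) * (g (fst \<omega>) * h \<omega>) \<partial>count_space UNIV) =
   (\<integral>\<^sup>+x. g x * (\<integral>\<^sup>+y. ennreal (pmf Q (x, y)) * h (x, y) \<partial>count_space UNIV) \<partial>count_space UNIV)"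
proof -
  have "(\<integral>\<^sup>+\<omega>. ennreal (pmf Q \<omega>) * (g (fst \<omega>) * h \<omega>) \<partial>count_space UNIV) =
     (\<integral>\<^sup>+x. \<integral>\<^sup>+y. g x * (ennreal (pmf Q (x, y)) * h (x, y)) \<partial>count_space UNIV \<partial>count_space UNIV)"
    by (subst nn_integral_fst_count_space[symmetric]) (simp add: ac_simps)
  then show ?thesis by (simp add: nn_integral_cmult)
qed

lemma nn_integral_slices_eq_emeasure:
  "(\<integral>\<^sup>+x. (\<integral>\<^sup>+y. ennreal (pmf Q (x, y)) * indicator A (x, y) \<partial>count_space UNIV) \<partial>count_space UNIV)
   = emeasure (measure_pmf Q) A"
  using nn_integral_pmf_fst_factor[of Q "\<lambda>_. 1" "indicator A"]
  by (simp add: nn_integral_measure_pmf[symmetric])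

lemma nn_integral_pX: "(\<integral>\<^sup>+x. ennreal (pX Q x) \<partial>count_space UNIV) = 1"
  using nn_integral_slices_eq_emeasure[of Q UNIV] by (simp add: ennreal_pX_eq_nn_integral)

lemma infsum_condYX:
  assumes "0 < pX Q x"
  shows "infsum (\<lambda>y. condYX Q y x) S =
    enn2real (\<integral>\<^sup>+y. ennreal (pmf Q (x, y)) * indicator S y \<partial>count_space UNIV) / pX Q x"
proof -
  have "infsum (\<lambda>y. condYX Q y x) S = enn2real (\<integral>\<^sup>+y. ennreal (condYX Q y x) \<partial>count_space S)"
    by (rule infsum_nonneg_eq_nn_integral) (simp add: condYX_def)
  also have "(\<integral>\<^sup>+y. ennreal (condYX Q y x) \<partial>count_space S) =
     (\<integral>\<^sup>+y. (ennreal (pmf Q (x, y)) * indicator S y) * ennreal (1 / pX Q x) \<partial>count_space UNIV)"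
    by (subst nn_integral_count_space_indicator)
       (auto intro!: nn_integral_cong simp: condYX_def ennreal_mult'[symmetric] split: split_indicator)
  also have "\<dots> = (\<integral>\<^sup>+y. ennreal (pmf Q (x, y)) * indicator S y \<partial>count_space UNIV) * ennreal (1 / pX Q x)"
    by (rule nn_integral_multc) simp
  finally show ?thesis using assms by (simp add: enn2real_mult)
qed

text \<open>In probabilistic terms, slice_mass Q x A = P(A \<inter> {X = x}) and info_mass Q x = E[L; X = x].\<close>
definition slice_mass :: "('a \<times> 'b) pmf \<Rightarrow> 'a \<Rightarrow> ('a \<times> 'b) set \<Rightarrow> ennreal" where
  "slice_mass Q x A = (\<integral>\<^sup>+y. ennreal (pmf Q (x, y)) * indicator A (x, y) \<partial>count_space UNIV)"

definition info_mass :: "('a \<times> 'b) pmf \<Rightarrow> 'a \<Rightarrow> ennreal" where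
  "info_mass Q x = (\<integral>\<^sup>+y. ennreal (pmf Q (x, y)) * ennreal (cond_info Q (x, y)) \<partial>count_space UNIV)"

lemma slice_mass_UNIV: "slice_mass Q x UNIV = ennreal (pX Q x)"
  by (simp add: slice_mass_def ennreal_pX_eq_nn_integral)

lemma slice_mass_mono: "A \<subseteq> B \<Longrightarrow> slice_mass Q x A \<le> slice_mass Q x B"
  unfolding slice_mass_def by (rule nn_integral_mono) (auto split: split_indicator)

lemma slice_mass_le_pX: "slice_mass Q x A \<le> ennreal (pX Q x)"
  using slice_mass_mono[of A UNIV Q x] by (simp add: slice_mass_UNIV)

lemma slice_mass_less_top [simp]: "slice_mass Q x A < \<top>"
  using slice_mass_le_pX[of Q x A] by (rule le_less_trans) simp

lemma slice_mass_add_compl: "slice_mass Q x A + slice_mass Q x (- A) = ennreal (pX Q x)"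
  unfolding slice_mass_def ennreal_pX_eq_nn_integral
  by (subst nn_integral_add[symmetric]) (auto intro!: nn_integral_cong split: split_indicator)

lemma nn_integral_slice_mass: "(\<integral>\<^sup>+x. slice_mass Q x A \<partial>count_space UNIV) = emeasure (measure_pmf Q) A"
  unfolding slice_mass_def by (rule nn_integral_slices_eq_emeasure)

lemma slice_mass_Markov:
  assumes "0 < a"
  shows "ennreal a * slice_mass Q x {\<omega>. a < cond_info Q \<omega>} \<le> info_mass Q x"
proof -
  have "ennreal a * (ennreal (pmf Q (x, y)) * indicator {\<omega>. a < cond_info Q \<omega>} (x, y)) \<le>
      ennreal (pmf Q (x, y)) * ennreal (cond_info Q (x, y))" for y
  proof (cases "a < cond_info Q (x, y)")
    case True
    then have "ennreal (pmf Q (x, y)) * ennreal a \<le> ennreal (pmf Q (x, y)) * ennreal (cond_info Q (x, y))"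
      by (intro mult_left_mono ennreal_leI) simp_all
    then show ?thesis using True by (simp add: mult.commute)
  qed simp
  then show ?thesis
    unfolding slice_mass_def info_mass_def
    by (subst nn_integral_cmult[symmetric]) (auto intro!: nn_integral_mono)
qed

lemma nn_integral_info_mass:
  "(\<integral>\<^sup>+x. info_mass Q x \<partial>count_space UNIV) = (\<integral>\<^sup>+\<omega>. ennreal (cond_info Q \<omega>) \<partial>measure_pmf Q)"
  using nn_integral_pmf_fst_factor[of Q "\<lambda>_. 1" "\<lambda>\<omega>. ennreal (cond_info Q \<omega>)"]
  by (simp add: nn_integral_measure_pmf info_mass_def)

lemma info_mass_le: "info_mass Q x \<le> (\<integral>\<^sup>+\<omega>. ennreal (cond_info Q \<omega>) \<partial>measure_pmf Q)"
proof -
  have "info_mass Q x = (\<integral>\<^sup>+x'. info_mass Q x' * indicator {x} x' \<partial>count_space UNIV)" by simp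
  also have "\<dots> \<le> (\<integral>\<^sup>+x'. info_mass Q x' \<partial>count_space UNIV)"
    by (rule nn_integral_mono) (simp split: split_indicator)
  finally show ?thesis by (simp add: nn_integral_info_mass)
qed

lemma hbar_eq_Inf_slice_mass:
  assumes "0 < pX Q x"
  shows "hbar \<epsilon> Q x = Inf {a. enn2real (slice_mass Q x {\<omega>. a < cond_info Q \<omega>}) / pX Q x \<le> \<epsilon>}"
proof -
  have "slice_mass Q x {\<omega>. a < cond_info Q \<omega>} = (\<integral>\<^sup>+y. ennreal (pmf Q (x, y)) *
      indicator {y. a < log 2 (1 / condXY Q x y)} y \<partial>count_space UNIV)" for a
    unfolding slice_mass_def
    by (intro nn_integral_cong) (simp add: cond_info_def split: split_indicator)
  then show ?thesis
    unfolding hbar_def using assms by (simp add: infsum_condYX)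
qed

context
  fixes Q :: "('a \<times> 'b) pmf" and x :: 'a and \<epsilon> :: real
  assumes pX_pos: "0 < pX Q x" and \<epsilon>_pos: "0 < \<epsilon>" and \<epsilon>_less_1: "\<epsilon> < 1"
    and info_mass_finite: "info_mass Q x < \<infinity>"
begin

private abbreviation admissible where
  "admissible \<equiv> {a. enn2real (slice_mass Q x {\<omega>. a < cond_info Q \<omega>}) / pX Q x \<le> \<epsilon>}"

private lemma admissible_nonneg: "a \<in> admissible \<Longrightarrow> 0 \<le> a"
proof (rule ccontr)
  assume "a \<in> admissible" "\<not> 0 \<le> a"
  then have "{\<omega>. a < cond_info Q \<omega>} = UNIV" using cond_info_nonneg[of Q] by (auto simp: not_le intro: less_le_trans)
  with \<open>a \<in> admissible\<close> pX_pos \<epsilon>_less_1 show False by (simp add: slice_mass_UNIV)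
qed

private lemma admissible_Markov:
  assumes "0 < t"
  shows "enn2real (info_mass Q x) / (\<epsilon> * pX Q x) + t \<in> admissible"
proof -
  define a where "a = enn2real (info_mass Q x) / (\<epsilon> * pX Q x) + t"
  have a_pos: "0 < a"
    unfolding a_def using pX_pos \<epsilon>_pos assms by (simp add: add_nonneg_pos)
  have "a * enn2real (slice_mass Q x {\<omega>. a < cond_info Q \<omega>}) \<le> enn2real (info_mass Q x)"
    using slice_mass_Markov[OF a_pos, of Q x] info_mass_finite a_pos
    by (auto dest!: enn2real_mono simp: enn2real_mult)
  also have "\<dots> \<le> a * (\<epsilon> * pX Q x)"
    unfolding a_def using pX_pos \<epsilon>_pos assms by (simp add: field_simps)
  finally show ?thesis
    unfolding a_def[symmetric] using a_pos pX_pos by (simp add: field_simps)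
qed

private lemma admissible_bdd_below: "bdd_below admissible"
  using admissible_nonneg by (auto simp: bdd_below_def)

lemma hbar_nonneg: "0 \<le> hbar \<epsilon> Q x"
  unfolding hbar_eq_Inf_slice_mass[OF pX_pos]
  using admissible_Markov[of 1] admissible_nonneg by (intro cInf_greatest) auto

lemma hbar_le: "enn2real (slice_mass Q x {\<omega>. b < cond_info Q \<omega>}) \<le> \<epsilon> * pX Q x \<Longrightarrow> hbar \<epsilon> Q x \<le> b"
  unfolding hbar_eq_Inf_slice_mass[OF pX_pos]
  using admissible_bdd_below pX_pos by (intro cInf_lower) (auto simp: field_simps)

lemma hbar_ge: "\<epsilon> * pX Q x < enn2real (slice_mass Q x {\<omega>. b < cond_info Q \<omega>}) \<Longrightarrow> b \<le> hbar \<epsilon> Q x"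
  unfolding hbar_eq_Inf_slice_mass[OF pX_pos]
proof (intro cInf_greatest)
  show "admissible \<noteq> {}" using admissible_Markov[of 1] by auto
next
  fix a assume b: "\<epsilon> * pX Q x < enn2real (slice_mass Q x {\<omega>. b < cond_info Q \<omega>})" and a: "a \<in> admissible"
  show "b \<le> a"
  proof (rule ccontr)
    assume "\<not> b \<le> a"
    then have "enn2real (slice_mass Q x {\<omega>. b < cond_info Q \<omega>}) \<le> enn2real (slice_mass Q x {\<omega>. a < cond_info Q \<omega>})"
      by (intro enn2real_mono slice_mass_mono) auto
    with a b pX_pos show False by (simp add: field_simps)
  qed
qed

lemma pX_mult_hbar_le: "pX Q x * hbar \<epsilon> Q x \<le> enn2real (info_mass Q x) / \<epsilon>"
proof -
  have "hbar \<epsilon> Q x \<le> enn2real (info_mass Q x) / (\<epsilon> * pX Q x)"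
  proof (rule field_le_epsilon)
    fix t :: real assume "0 < t"
    then show "hbar \<epsilon> Q x \<le> enn2real (info_mass Q x) / (\<epsilon> * pX Q x) + t"
      unfolding hbar_eq_Inf_slice_mass[OF pX_pos]
      using admissible_bdd_below admissible_Markov by (intro cInf_lower) auto
  qed
  then show ?thesis using pX_pos \<epsilon>_pos by (simp add: field_simps)
qed

end

lemma ennreal_mult_enn2real: "0 \<le> a \<Longrightarrow> X < \<top> \<Longrightarrow> ennreal (a * enn2real X) = ennreal a * X"
  by (simp add: ennreal_mult)

definition info_tail :: "('a \<times> 'b) pmf \<Rightarrow> real \<Rightarrow> ennreal" where
  "info_tail Q c = (\<integral>\<^sup>+\<omega>. ennreal (cond_info Q \<omega>) * indicator {\<omega>. c \<le> cond_info Q \<omega>} \<omega> \<partial>measure_pmf Q)"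

definition heavy_slices :: "('a \<times> 'b) pmf \<Rightarrow> real \<Rightarrow> real \<Rightarrow> 'a set" where
  "heavy_slices Q \<epsilon> b = {x. \<epsilon> * pX Q x < enn2real (slice_mass Q x {\<omega>. b < cond_info Q \<omega>})}"

lemma info_tail_le: "info_tail Q c \<le> (\<integral>\<^sup>+\<omega>. ennreal (cond_info Q \<omega>) \<partial>measure_pmf Q)"
  unfolding info_tail_def by (rule nn_integral_mono) (simp split: split_indicator)

lemma nn_integral_indicator_info_mass_le:
  assumes "0 \<le> c"
  shows "(\<integral>\<^sup>+x. indicator B x * info_mass Q x \<partial>count_space UNIV) \<le>
    info_tail Q c + ennreal c * (\<integral>\<^sup>+x. indicator B x * ennreal (pX Q x) \<partial>count_space UNIV)"
proof -
  have "(\<integral>\<^sup>+x. indicator B x * info_mass Q x \<partial>count_space UNIV) =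
      (\<integral>\<^sup>+\<omega>. ennreal (pmf Q \<omega>) * (indicator B (fst \<omega>) * ennreal (cond_info Q \<omega>)) \<partial>count_space UNIV)"
    by (subst nn_integral_pmf_fst_factor) (simp add: info_mass_def)
  also have "\<dots> \<le> (\<integral>\<^sup>+\<omega>. ennreal (pmf Q \<omega>) * (ennreal (cond_info Q \<omega>) * indicator {\<omega>. c \<le> cond_info Q \<omega>} \<omega>)
      + ennreal c * (ennreal (pmf Q \<omega>) * (indicator B (fst \<omega>) * 1)) \<partial>count_space UNIV)"
  proof (rule nn_integral_mono)
    fix \<omega>
    have "indicator B (fst \<omega>) * ennreal (cond_info Q \<omega>) \<le>
        ennreal (cond_info Q \<omega>) * indicator {\<omega>. c \<le> cond_info Q \<omega>} \<omega> + ennreal c * indicator B (fst \<omega>)"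
      using assms by (auto split: split_indicator intro: ennreal_leI)
    then have "ennreal (pmf Q \<omega>) * (indicator B (fst \<omega>) * ennreal (cond_info Q \<omega>)) \<le>
        ennreal (pmf Q \<omega>) * (ennreal (cond_info Q \<omega>) * indicator {\<omega>. c \<le> cond_info Q \<omega>} \<omega>
          + ennreal c * indicator B (fst \<omega>))"
      by (rule mult_left_mono) simp
    then show "ennreal (pmf Q \<omega>) * (indicator B (fst \<omega>) * ennreal (cond_info Q \<omega>)) \<le>
        ennreal (pmf Q \<omega>) * (ennreal (cond_info Q \<omega>) * indicator {\<omega>. c \<le> cond_info Q \<omega>} \<omega>)
        + ennreal c * (ennreal (pmf Q \<omega>) * (indicator B (fst \<omega>) * 1))"
      by (simp add: distrib_left ac_simps)
  qed
  also have "\<dots> = info_tail Q c + ennreal c * (\<integral>\<^sup>+x. indicator B x * ennreal (pX Q x) \<partial>count_space UNIV)"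
  proof -
    have "(\<integral>\<^sup>+\<omega>. ennreal (pmf Q \<omega>) * (indicator B (fst \<omega>) * 1) \<partial>count_space UNIV)
      = (\<integral>\<^sup>+x. indicator B x * ennreal (pX Q x) \<partial>count_space UNIV)"
      using nn_integral_pmf_fst_factor[of Q "indicator B" "\<lambda>_. 1"]
      by (simp add: ennreal_pX_eq_nn_integral)
    then show ?thesis
      by (simp add: nn_integral_add nn_integral_cmult nn_integral_measure_pmf info_tail_def
          del: mult_1_right)
  qed
  finally show ?thesis .
qed

lemma nn_integral_heavy_slices_le:
  assumes "0 < \<epsilon>"
  shows "(\<integral>\<^sup>+x. indicator (heavy_slices Q \<epsilon> b) x * ennreal (pX Q x) \<partial>count_space UNIV) \<le>
    ennreal (1 / \<epsilon>) * emeasure (measure_pmf Q) {\<omega>. b < cond_info Q \<omega>}"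
proof -
  have pointwise: "indicator (heavy_slices Q \<epsilon> b) x * ennreal (pX Q x) \<le>
      ennreal (1 / \<epsilon>) * slice_mass Q x {\<omega>. b < cond_info Q \<omega>}" for x
  proof (cases "x \<in> heavy_slices Q \<epsilon> b")
    case True
    then have "pX Q x \<le> (1 / \<epsilon>) * enn2real (slice_mass Q x {\<omega>. b < cond_info Q \<omega>})"
      using assms by (simp add: heavy_slices_def field_simps)
    then have "ennreal (pX Q x) \<le> ennreal ((1 / \<epsilon>) * enn2real (slice_mass Q x {\<omega>. b < cond_info Q \<omega>}))"
      by (rule ennreal_leI)
    also have "\<dots> = ennreal (1 / \<epsilon>) * slice_mass Q x {\<omega>. b < cond_info Q \<omega>}"
      using assms by (intro ennreal_mult_enn2real) simp_all
    finally show ?thesis using True by simp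
  qed simp
  have "(\<integral>\<^sup>+x. indicator (heavy_slices Q \<epsilon> b) x * ennreal (pX Q x) \<partial>count_space UNIV) \<le>
      (\<integral>\<^sup>+x. ennreal (1 / \<epsilon>) * slice_mass Q x {\<omega>. b < cond_info Q \<omega>} \<partial>count_space UNIV)"
    by (rule nn_integral_mono) (rule pointwise)
  then show ?thesis by (simp add: nn_integral_cmult nn_integral_slice_mass)
qed

lemma cond_entropy_eq_nn_integral:
  "cond_entropy Q = enn2real (\<integral>\<^sup>+\<omega>. ennreal (cond_info Q \<omega>) \<partial>measure_pmf Q)"
proof -
  have "cond_entropy Q = integral\<^sup>L (measure_pmf Q) (cond_info Q)"
    unfolding cond_entropy_def cond_info_def by simp
  also have "\<dots> = enn2real (\<integral>\<^sup>+\<omega>. ennreal (cond_info Q \<omega>) \<partial>measure_pmf Q)"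
    by (rule integral_eq_nn_integral) (auto simp: cond_info_nonneg)
  finally show ?thesis .
qed

lemma nn_integral_cond_info_le:
  assumes "0 \<le> c"
  shows "(\<integral>\<^sup>+\<omega>. ennreal (cond_info Q \<omega>) \<partial>measure_pmf Q) \<le>
    ennreal b + (info_tail Q c + ennreal c * emeasure (measure_pmf Q) {\<omega>. b < cond_info Q \<omega>})"
proof -
  have "(\<integral>\<^sup>+\<omega>. ennreal (cond_info Q \<omega>) \<partial>measure_pmf Q) \<le> (\<integral>\<^sup>+\<omega>. ennreal b +
      (ennreal (cond_info Q \<omega>) * indicator {\<omega>. c \<le> cond_info Q \<omega>} \<omega>
        + ennreal c * indicator {\<omega>. b < cond_info Q \<omega>} \<omega>) \<partial>measure_pmf Q)"
  proof (rule nn_integral_mono)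
    fix \<omega>
    show "ennreal (cond_info Q \<omega>) \<le> ennreal b +
      (ennreal (cond_info Q \<omega>) * indicator {\<omega>. c \<le> cond_info Q \<omega>} \<omega>
        + ennreal c * indicator {\<omega>. b < cond_info Q \<omega>} \<omega>)"
    proof (cases "cond_info Q \<omega> \<le> b")
      case True then show ?thesis by (simp add: add_increasing2 ennreal_leI)
    next
      case False
      then show ?thesis
        by (cases "c \<le> cond_info Q \<omega>") (auto simp: add_increasing ennreal_leI split: split_indicator)
    qed
  qed
  also have "\<dots> = ennreal b + (info_tail Q c + ennreal c * emeasure (measure_pmf Q) {\<omega>. b < cond_info Q \<omega>})"
    by (simp add: nn_integral_add nn_integral_cmult measure_pmf.emeasure_space_1 info_tail_def)
  finally show ?thesis .
qed

lemma nn_integral_cond_info_ge: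
  "ennreal b \<le> (\<integral>\<^sup>+\<omega>. ennreal (cond_info Q \<omega>) \<partial>measure_pmf Q)
     + ennreal b * emeasure (measure_pmf Q) {\<omega>. cond_info Q \<omega> \<le> b}"
proof -
  have "ennreal b = (\<integral>\<^sup>+\<omega>. ennreal b \<partial>measure_pmf Q)"
    by (simp add: measure_pmf.emeasure_space_1)
  also have "\<dots> \<le> (\<integral>\<^sup>+\<omega>. ennreal (cond_info Q \<omega>) + ennreal b * indicator {\<omega>. cond_info Q \<omega> \<le> b} \<omega>
      \<partial>measure_pmf Q)"
    by (rule nn_integral_mono) (auto split: split_indicator simp: add_increasing ennreal_leI)
  also have "\<dots> = (\<integral>\<^sup>+\<omega>. ennreal (cond_info Q \<omega>) \<partial>measure_pmf Q)
      + ennreal b * emeasure (measure_pmf Q) {\<omega>. cond_info Q \<omega> \<le> b}"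
    by (simp add: nn_integral_add nn_integral_cmult)
  finally show ?thesis .
qed

lemma nn_integral_cond_info_finite:
  assumes "0 \<le> c" and "info_tail Q c < \<infinity>"
  shows "(\<integral>\<^sup>+\<omega>. ennreal (cond_info Q \<omega>) \<partial>measure_pmf Q) < \<infinity>"
proof -
  have "(\<integral>\<^sup>+\<omega>. ennreal (cond_info Q \<omega>) \<partial>measure_pmf Q) \<le>
      ennreal 0 + (info_tail Q c + ennreal c * emeasure (measure_pmf Q) {\<omega>. 0 < cond_info Q \<omega>})"
    by (rule nn_integral_cond_info_le[OF assms(1)])
  also have "\<dots> < \<infinity>"
    using assms(2) by (simp add: ennreal_mult_less_top measure_pmf.emeasure_eq_measure)
  finally show ?thesis .
qed

lemma cond_entropy_le:
  assumes "0 \<le> b" and "0 \<le> c" and "info_tail Q c < \<infinity>"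
  shows "cond_entropy Q \<le> b + enn2real (info_tail Q c) + c * measure (measure_pmf Q) {\<omega>. b < cond_info Q \<omega>}"
proof -
  have "info_tail Q c = ennreal (enn2real (info_tail Q c))"
    using assms(3) by simp
  then have "(\<integral>\<^sup>+\<omega>. ennreal (cond_info Q \<omega>) \<partial>measure_pmf Q) \<le>
      ennreal (b + enn2real (info_tail Q c) + c * measure (measure_pmf Q) {\<omega>. b < cond_info Q \<omega>})"
    using nn_integral_cond_info_le[OF assms(2), of Q b] assms(1,2)
    by (simp add: measure_pmf.emeasure_eq_measure ennreal_plus ennreal_mult add.assoc)
  then show ?thesis
    unfolding cond_entropy_eq_nn_integral using assms by (intro enn2real_leI) auto
qed

lemma cond_entropy_ge:
  assumes "0 \<le> b" and "(\<integral>\<^sup>+\<omega>. ennreal (cond_info Q \<omega>) \<partial>measure_pmf Q) < \<infinity>"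
  shows "b - b * measure (measure_pmf Q) {\<omega>. cond_info Q \<omega> \<le> b} \<le> cond_entropy Q"
proof -
  have "ennreal b \<le> ennreal (cond_entropy Q + b * measure (measure_pmf Q) {\<omega>. cond_info Q \<omega> \<le> b})"
    using nn_integral_cond_info_ge[of b Q] assms
    by (simp add: cond_entropy_eq_nn_integral measure_pmf.emeasure_eq_measure ennreal_plus ennreal_mult)
  moreover have "0 \<le> cond_entropy Q" by (simp add: cond_entropy_eq_nn_integral)
  ultimately show ?thesis
    using assms(1) by (simp add: ennreal_le_iff flip: ennreal_plus)
qed

context
  fixes Q :: "('a \<times> 'b) pmf" and \<epsilon> :: real
  assumes \<epsilon>_pos: "0 < \<epsilon>" and \<epsilon>_less_1: "\<epsilon> < 1"
    and info_finite: "(\<integral>\<^sup>+\<omega>. ennreal (cond_info Q \<omega>) \<partial>measure_pmf Q) < \<infinity>"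
begin

private abbreviation Hs_sum where
  "Hs_sum \<equiv> (\<integral>\<^sup>+x. ennreal (pX Q x * hbar \<epsilon> Q x) \<partial>count_space UNIV)"

private lemma info_mass_finite: "info_mass Q x < \<infinity>"
  using info_mass_le[of Q x] info_finite by (rule le_less_trans)

private lemma info_tail_eq: "info_tail Q c = ennreal (enn2real (info_tail Q c))"
  using info_tail_le[of Q c] info_finite by (simp add: ennreal_enn2real_if top.not_eq_extremum)

lemma smooth_Hs_eq_nn_integral: "smooth_Hs \<epsilon> Q = enn2real Hs_sum"
  unfolding smooth_Hs_def
proof (rule infsum_nonneg_eq_nn_integral)
  fix x
  show "0 \<le> pX Q x * hbar \<epsilon> Q x"
    using hbar_nonneg[OF _ \<epsilon>_pos \<epsilon>_less_1 info_mass_finite, of x]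
    by (cases "pX Q x = 0") (auto simp: less_le)
qed

lemma ennreal_pX_mult_hbar_le:
  "ennreal (pX Q x * hbar \<epsilon> Q x) \<le>
     ennreal (pX Q x) * ennreal b + ennreal (1 / \<epsilon>) * (indicator (heavy_slices Q \<epsilon> b) x * info_mass Q x)"
proof (cases "pX Q x = 0")
  case False
  then have pX_pos: "0 < pX Q x" by (simp add: less_le)
  note hbar = hbar_le[OF pX_pos \<epsilon>_pos \<epsilon>_less_1 info_mass_finite]
    pX_mult_hbar_le[OF pX_pos \<epsilon>_pos \<epsilon>_less_1 info_mass_finite]
  show ?thesis
  proof (cases "x \<in> heavy_slices Q \<epsilon> b")
    case True
    have "ennreal (pX Q x * hbar \<epsilon> Q x) \<le> ennreal ((1 / \<epsilon>) * enn2real (info_mass Q x))"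
      using hbar(2) by (intro ennreal_leI) simp
    also have "\<dots> = ennreal (1 / \<epsilon>) * info_mass Q x"
      using \<epsilon>_pos info_mass_finite by (intro ennreal_mult_enn2real) simp_all
    finally show ?thesis using True by (simp add: add_increasing)
  next
    case False
    then have "pX Q x * hbar \<epsilon> Q x \<le> pX Q x * b"
      using hbar(1) pX_pos by (simp add: heavy_slices_def mult_left_mono)
    then have "ennreal (pX Q x * hbar \<epsilon> Q x) \<le> ennreal (pX Q x) * ennreal b"
      by (simp add: ennreal_mult'[symmetric] ennreal_leI)
    then show ?thesis by (simp add: add_increasing2)
  qed
qed simp

lemma nn_integral_pX_mult_hbar_le:
  assumes "0 \<le> b" and "0 \<le> c"
  shows "Hs_sum \<le> ennreal (b + (enn2real (info_tail Q c)
      + c * measure (measure_pmf Q) {\<omega>. b < cond_info Q \<omega>} / \<epsilon>) / \<epsilon>)"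
proof -
  define p where "p = measure (measure_pmf Q) {\<omega>. b < cond_info Q \<omega>}"
  have "Hs_sum \<le> (\<integral>\<^sup>+x. ennreal (pX Q x) * ennreal b
      + ennreal (1 / \<epsilon>) * (indicator (heavy_slices Q \<epsilon> b) x * info_mass Q x) \<partial>count_space UNIV)"
    by (rule nn_integral_mono) (rule ennreal_pX_mult_hbar_le)
  also have "\<dots> = ennreal b + ennreal (1 / \<epsilon>) *
      (\<integral>\<^sup>+x. indicator (heavy_slices Q \<epsilon> b) x * info_mass Q x \<partial>count_space UNIV)"
    by (simp add: nn_integral_add nn_integral_cmult nn_integral_multc nn_integral_pX)
  also have "\<dots> \<le> ennreal b + ennreal (1 / \<epsilon>) *
      (info_tail Q c + ennreal c * (ennreal (1 / \<epsilon>) * emeasure (measure_pmf Q) {\<omega>. b < cond_info Q \<omega>}))"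
  proof -
    have "(\<integral>\<^sup>+x. indicator (heavy_slices Q \<epsilon> b) x * info_mass Q x \<partial>count_space UNIV) \<le>
        info_tail Q c + ennreal c * (\<integral>\<^sup>+x. indicator (heavy_slices Q \<epsilon> b) x * ennreal (pX Q x) \<partial>count_space UNIV)"
      by (rule nn_integral_indicator_info_mass_le[OF assms(2)])
    also have "\<dots> \<le> info_tail Q c + ennreal c * (ennreal (1 / \<epsilon>) * emeasure (measure_pmf Q) {\<omega>. b < cond_info Q \<omega>})"
      by (intro add_left_mono mult_left_mono nn_integral_heavy_slices_le[OF \<epsilon>_pos]) simp
    finally show ?thesis by (intro add_left_mono mult_left_mono) simp_all
  qed
  also have "\<dots> = ennreal (b + (1 / \<epsilon>) * (enn2real (info_tail Q c) + c * ((1 / \<epsilon>) * p)))"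
  proof -
    have combine: "ennreal a + ennreal e * (ennreal t + ennreal c * (ennreal e * ennreal q)) =
        ennreal (a + e * (t + c * (e * q)))"
      if "0 \<le> a" "0 \<le> e" "0 \<le> t" "0 \<le> c" "0 \<le> q" for a e t c q :: real
      using that by (simp add: ennreal_plus ennreal_mult)
    show ?thesis
      unfolding p_def measure_pmf.emeasure_eq_measure
      by (subst info_tail_eq, rule combine) (use assms \<epsilon>_pos in auto)
  qed
  finally show ?thesis by (simp add: p_def field_simps)
qed

lemma smooth_Hs_le:
  assumes "0 \<le> b" and "0 \<le> c"
  shows "smooth_Hs \<epsilon> Q \<le> b + (enn2real (info_tail Q c)
      + c * measure (measure_pmf Q) {\<omega>. b < cond_info Q \<omega>} / \<epsilon>) / \<epsilon>"
  unfolding smooth_Hs_eq_nn_integral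
  using nn_integral_pX_mult_hbar_le[OF assms] assms \<epsilon>_pos by (intro enn2real_leI) auto

lemma ennreal_pX_mult_le_hbar:
  assumes "0 \<le> b"
  shows "ennreal (pX Q x) * ennreal b \<le> ennreal (pX Q x * hbar \<epsilon> Q x)
    + ennreal b * (ennreal (1 / (1 - \<epsilon>)) * slice_mass Q x {\<omega>. cond_info Q \<omega> \<le> b})"
proof (cases "pX Q x = 0")
  case False
  then have pX_pos: "0 < pX Q x" by (simp add: less_le)
  show ?thesis
  proof (cases "\<epsilon> * pX Q x < enn2real (slice_mass Q x {\<omega>. b < cond_info Q \<omega>})")
    case True
    then have "pX Q x * b \<le> pX Q x * hbar \<epsilon> Q x"
      using hbar_ge[OF pX_pos \<epsilon>_pos \<epsilon>_less_1 info_mass_finite] pX_pos by (simp add: mult_left_mono)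
    then have "ennreal (pX Q x) * ennreal b \<le> ennreal (pX Q x * hbar \<epsilon> Q x)"
      using assms by (simp add: ennreal_mult[symmetric] ennreal_leI)
    then show ?thesis by (simp add: add_increasing2)
  next
    case False
    have "- {\<omega>. b < cond_info Q \<omega>} = {\<omega>. cond_info Q \<omega> \<le> b}" by auto
    then have "enn2real (slice_mass Q x {\<omega>. b < cond_info Q \<omega>})
        + enn2real (slice_mass Q x {\<omega>. cond_info Q \<omega> \<le> b}) = pX Q x"
      using slice_mass_add_compl[of Q x "{\<omega>. b < cond_info Q \<omega>}"]
      by (simp flip: enn2real_plus)
    then have "pX Q x \<le> (1 / (1 - \<epsilon>)) * enn2real (slice_mass Q x {\<omega>. cond_info Q \<omega> \<le> b})"
      using False \<epsilon>_less_1 by (simp add: field_simps)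
    then have "ennreal (pX Q x) \<le> ennreal ((1 / (1 - \<epsilon>)) * enn2real (slice_mass Q x {\<omega>. cond_info Q \<omega> \<le> b}))"
      by (rule ennreal_leI)
    also have "\<dots> = ennreal (1 / (1 - \<epsilon>)) * slice_mass Q x {\<omega>. cond_info Q \<omega> \<le> b}"
      using \<epsilon>_less_1 by (intro ennreal_mult_enn2real) simp_all
    finally have "ennreal (pX Q x) \<le> ennreal (1 / (1 - \<epsilon>)) * slice_mass Q x {\<omega>. cond_info Q \<omega> \<le> b}" .
    then have "ennreal (pX Q x) * ennreal b \<le>
        ennreal b * (ennreal (1 / (1 - \<epsilon>)) * slice_mass Q x {\<omega>. cond_info Q \<omega> \<le> b})"
      by (simp add: mult.commute mult_left_mono)
    then show ?thesis by (simp add: add_increasing)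
  qed
qed simp

lemma smooth_Hs_ge:
  assumes "0 \<le> b"
  shows "b - b * measure (measure_pmf Q) {\<omega>. cond_info Q \<omega> \<le> b} / (1 - \<epsilon>) \<le> smooth_Hs \<epsilon> Q"
proof -
  define p where "p = measure (measure_pmf Q) {\<omega>. cond_info Q \<omega> \<le> b}"
  have "ennreal b = (\<integral>\<^sup>+x. ennreal (pX Q x) * ennreal b \<partial>count_space UNIV)"
    by (simp add: nn_integral_multc nn_integral_pX)
  also have "\<dots> \<le> (\<integral>\<^sup>+x. ennreal (pX Q x * hbar \<epsilon> Q x)
      + ennreal b * (ennreal (1 / (1 - \<epsilon>)) * slice_mass Q x {\<omega>. cond_info Q \<omega> \<le> b}) \<partial>count_space UNIV)"
    by (rule nn_integral_mono) (rule ennreal_pX_mult_le_hbar[OF assms])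
  also have "\<dots> = Hs_sum + ennreal b * (ennreal (1 / (1 - \<epsilon>)) * ennreal p)"
    by (simp add: nn_integral_add nn_integral_cmult nn_integral_slice_mass p_def
        measure_pmf.emeasure_eq_measure)
  also have "\<dots> = ennreal (smooth_Hs \<epsilon> Q + b * (1 / (1 - \<epsilon>) * p))"
  proof -
    have "Hs_sum < \<infinity>"
      using nn_integral_pX_mult_hbar_le[OF assms order.refl] by (rule le_less_trans) simp
    then have Hs_sum_eq: "Hs_sum = ennreal (smooth_Hs \<epsilon> Q)"
      by (simp add: smooth_Hs_eq_nn_integral)
    have combine: "ennreal s + ennreal b * (ennreal e * ennreal p) = ennreal (s + b * (e * p))"
      if "0 \<le> s" "0 \<le> e" for s e
      using that assms by (simp add: p_def ennreal_plus ennreal_mult)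
    show ?thesis
      unfolding Hs_sum_eq by (rule combine) (use \<epsilon>_less_1 in \<open>simp_all add: smooth_Hs_eq_nn_integral\<close>)
  qed
  finally have "b \<le> smooth_Hs \<epsilon> Q + b * (1 / (1 - \<epsilon>) * p)"
    using assms \<epsilon>_less_1 by (subst (asm) ennreal_le_iff) (auto simp: p_def smooth_Hs_eq_nn_integral)
  then show ?thesis by (simp add: p_def)
qed

end

lemma Zn_eq_cond_info: "Zn P n \<omega> = cond_info (P n) \<omega> / real n"
  by (cases \<omega>) (simp add: Zn_def cond_info_def)

lemma Zn_nonneg: "0 \<le> Zn P n \<omega>"
  by (simp add: Zn_eq_cond_info cond_info_nonneg)

definition Zn_tail :: "(nat \<Rightarrow> ('a \<times> 'b) pmf) \<Rightarrow> nat \<Rightarrow> real \<Rightarrow> ennreal" where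
  "Zn_tail P n u = (\<integral>\<^sup>+\<omega>. ennreal (Zn P n \<omega>) * indicator {\<omega>. u \<le> Zn P n \<omega>} \<omega> \<partial>measure_pmf (P n))"

lemma uniformly_integrable_iff_Zn_tail:
  "uniformly_integrable P \<longleftrightarrow> ((\<lambda>u. SUP n\<in>{1..}. Zn_tail P n u) \<longlongrightarrow> 0) at_top"
proof -
  have "(\<integral>\<^sup>+z. ennreal (\<bar>z\<bar> * indicator {z. u \<le> \<bar>z\<bar>} z) \<partial>measure_pmf (map_pmf (Zn P n) (P n)))
      = Zn_tail P n u" for n u
    unfolding nn_integral_map_pmf Zn_tail_def
    by (rule nn_integral_cong) (simp add: Zn_nonneg split: split_indicator)
  then show ?thesis by (simp add: uniformly_integrable_def)
qed

lemma uniformly_integrableD: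
  assumes "uniformly_integrable P" and "0 < e"
  shows "\<exists>u\<ge>0. \<forall>n\<ge>1. Zn_tail P n u < ennreal e"
proof -
  have "\<forall>\<^sub>F u in at_top. (SUP n\<in>{1..}. Zn_tail P n u) < ennreal e"
    using assms by (intro order_tendstoD(2)) (auto simp: uniformly_integrable_iff_Zn_tail)
  then obtain u0 where u0: "\<And>u. u0 \<le> u \<Longrightarrow> (SUP n\<in>{1..}. Zn_tail P n u) < ennreal e"
    by (auto simp: eventually_at_top_linorder)
  have "Zn_tail P n (max u0 0) < ennreal e" if "1 \<le> n" for n
  proof -
    have "Zn_tail P n (max u0 0) \<le> (SUP n\<in>{1..}. Zn_tail P n (max u0 0))"
      using that by (intro SUP_upper) auto
    also have "\<dots> < ennreal e" by (rule u0) simp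
    finally show ?thesis .
  qed
  then show ?thesis by (intro exI[of _ "max u0 0"]) auto
qed

lemma info_tail_eq_Zn_tail:
  assumes "0 < n"
  shows "info_tail (P n) (real n * u) = ennreal (real n) * Zn_tail P n u"
proof -
  have "info_tail (P n) (real n * u) =
      (\<integral>\<^sup>+\<omega>. ennreal (real n) * (ennreal (Zn P n \<omega>) * indicator {\<omega>. u \<le> Zn P n \<omega>} \<omega>) \<partial>measure_pmf (P n))"
    unfolding info_tail_def using assms
    by (intro nn_integral_cong)
       (auto split: split_indicator simp: ennreal_mult[symmetric] Zn_eq_cond_info cond_info_nonneg field_simps)
  then show ?thesis by (simp add: nn_integral_cmult Zn_tail_def)
qed

lemma cond_info_finite_of_Zn_tail:
  assumes "1 \<le> n" and "0 \<le> u" and "Zn_tail P n u < \<infinity>"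
  shows "(\<integral>\<^sup>+\<omega>. ennreal (cond_info (P n) \<omega>) \<partial>measure_pmf (P n)) < \<infinity>"
  using assms
  by (intro nn_integral_cond_info_finite[of "real n * u"]) (auto simp: info_tail_eq_Zn_tail ennreal_mult_less_top)

lemma cond_info_greater_iff_Zn: "1 \<le> n \<Longrightarrow> real n * t < cond_info (P n) \<omega> \<longleftrightarrow> t < Zn P n \<omega>"
  by (auto simp: Zn_eq_cond_info field_simps)

lemma cond_info_le_iff_Zn: "1 \<le> n \<Longrightarrow> cond_info (P n) \<omega> \<le> real n * t \<longleftrightarrow> Zn P n \<omega> \<le> t"
  by (auto simp: Zn_eq_cond_info field_simps)

lemma enn2real_info_tail_eq_Zn_tail:
  "1 \<le> n \<Longrightarrow> enn2real (info_tail (P n) (real n * u)) = real n * enn2real (Zn_tail P n u)"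
  by (simp add: info_tail_eq_Zn_tail enn2real_mult)

lemma cond_entropy_div_le:
  assumes n: "1 \<le> n" and t: "0 \<le> t" and u: "0 \<le> u" and "Zn_tail P n u < \<infinity>"
  shows "cond_entropy (P n) / real n \<le>
    t + enn2real (Zn_tail P n u) + u * measure (measure_pmf (P n)) {\<omega>. t < Zn P n \<omega>}"
proof -
  have "info_tail (P n) (real n * u) < \<infinity>"
    using assms by (simp add: info_tail_eq_Zn_tail ennreal_mult_less_top)
  then have "cond_entropy (P n) \<le> real n * t + real n * enn2real (Zn_tail P n u)
      + real n * u * measure (measure_pmf (P n)) {\<omega>. t < Zn P n \<omega>}"
    using cond_entropy_le[of "real n * t" "real n * u" "P n"] t u
    unfolding cond_info_greater_iff_Zn[OF n] enn2real_info_tail_eq_Zn_tail[OF n] by simp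
  then show ?thesis using n by (simp add: field_simps)
qed

lemma cond_entropy_div_ge:
  assumes n: "1 \<le> n" and t: "0 \<le> t" and "(\<integral>\<^sup>+\<omega>. ennreal (cond_info (P n) \<omega>) \<partial>measure_pmf (P n)) < \<infinity>"
  shows "t - t * measure (measure_pmf (P n)) {\<omega>. Zn P n \<omega> \<le> t} \<le> cond_entropy (P n) / real n"
proof -
  have "real n * t - real n * t * measure (measure_pmf (P n)) {\<omega>. Zn P n \<omega> \<le> t} \<le> cond_entropy (P n)"
    using cond_entropy_ge[of "real n * t" "P n"] t assms unfolding cond_info_le_iff_Zn[OF n] by simp
  then show ?thesis using n by (simp add: field_simps)
qed

lemma smooth_Hs_div_le:
  assumes n: "1 \<le> n" and t: "0 \<le> t" and u: "0 \<le> u" and "0 < \<epsilon>" "\<epsilon> < 1"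
    and "Zn_tail P n u < \<infinity>"
  shows "smooth_Hs \<epsilon> (P n) / real n \<le>
    t + enn2real (Zn_tail P n u) / \<epsilon> + u * measure (measure_pmf (P n)) {\<omega>. t < Zn P n \<omega>} / \<epsilon>\<^sup>2"
proof -
  have "smooth_Hs \<epsilon> (P n) \<le> real n * t + (real n * enn2real (Zn_tail P n u)
      + real n * u * measure (measure_pmf (P n)) {\<omega>. t < Zn P n \<omega>} / \<epsilon>) / \<epsilon>"
    using smooth_Hs_le[OF assms(4,5) cond_info_finite_of_Zn_tail[OF n u assms(6)], of "real n * t" "real n * u"] t u
    unfolding cond_info_greater_iff_Zn[OF n] enn2real_info_tail_eq_Zn_tail[OF n] by simp
  also have "\<dots> = real n * (t + enn2real (Zn_tail P n u) / \<epsilon>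
      + u * measure (measure_pmf (P n)) {\<omega>. t < Zn P n \<omega>} / \<epsilon>\<^sup>2)"
    using assms(4) by (simp add: field_simps power2_eq_square)
  finally show ?thesis using n by (simp add: pos_divide_le_eq mult.commute)
qed

lemma smooth_Hs_div_ge:
  assumes n: "1 \<le> n" and t: "0 \<le> t" and "0 < \<epsilon>" "\<epsilon> < 1" and "(\<integral>\<^sup>+\<omega>. ennreal (cond_info (P n) \<omega>) \<partial>measure_pmf (P n)) < \<infinity>"
  shows "t - t * measure (measure_pmf (P n)) {\<omega>. Zn P n \<omega> \<le> t} / (1 - \<epsilon>) \<le> smooth_Hs \<epsilon> (P n) / real n"
proof -
  have "real n * t - real n * t * measure (measure_pmf (P n)) {\<omega>. Zn P n \<omega> \<le> t} / (1 - \<epsilon>)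
      \<le> smooth_Hs \<epsilon> (P n)"
    using smooth_Hs_ge[OF assms(3-5), of "real n * t"] t unfolding cond_info_le_iff_Zn[OF n] by simp
  then show ?thesis using n assms(4) by (simp add: field_simps)
qed

lemma eventually_less_of_tail_bound:
  fixes X :: "nat \<Rightarrow> real" and p :: "real \<Rightarrow> nat \<Rightarrow> real" and T :: "nat \<Rightarrow> real \<Rightarrow> ennreal"
  assumes c: "0 < c" and "H < a"
    and p: "\<And>t. H < t \<Longrightarrow> p t \<longlonglongrightarrow> 0"
    and T: "\<And>e. 0 < e \<Longrightarrow> \<exists>u\<ge>0. \<forall>n\<ge>1. T n u < ennreal e"
    and bound: "\<And>n t u. 1 \<le> n \<Longrightarrow> 0 \<le> t \<Longrightarrow> 0 \<le> u \<Longrightarrow> T n u < \<infinity> \<Longrightarrow>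
      X n \<le> t + enn2real (T n u) / c + u * p t n / c\<^sup>2"
    and "0 \<le> H"
  shows "\<forall>\<^sub>F n in sequentially. X n < a"
proof -
  define r where "r = (a - H) / 3"
  have r: "0 < r" using \<open>H < a\<close> by (simp add: r_def)
  obtain u where u: "0 \<le> u" and T_small: "\<And>n. 1 \<le> n \<Longrightarrow> T n u < ennreal (r * c)"
    using T[of "r * c"] r c by auto
  have "(\<lambda>n. u * p (H + r) n / c\<^sup>2) \<longlonglongrightarrow> 0"
    using p[of "H + r"] r c by (auto intro!: tendsto_eq_intros)
  then have "\<forall>\<^sub>F n in sequentially. u * p (H + r) n / c\<^sup>2 < r"
    using r by (intro order_tendstoD(2)) auto
  moreover have "\<forall>\<^sub>F n in sequentially. 1 \<le> n" by simp
  ultimately show ?thesis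
  proof eventually_elim
    case (elim n)
    have "T n u < \<infinity>" using T_small[OF elim(2)] by (rule less_trans) simp
    moreover have "ennreal (enn2real (T n u)) < ennreal (r * c)"
      using T_small[OF elim(2)] calculation by simp
    then have "enn2real (T n u) / c < r"
      using c by (simp add: ennreal_less_iff field_simps)
    moreover have "X n \<le> (H + r) + enn2real (T n u) / c + u * p (H + r) n / c\<^sup>2"
      using bound[OF elim(2) _ u calculation(1)] r \<open>0 \<le> H\<close> by simp
    moreover have "a = H + 3 * r" by (simp add: r_def field_simps)
    ultimately show "X n < a"
      using elim(1) by linarith
  qed
qed

lemma eventually_greater_of_lower_bound:
  fixes X :: "nat \<Rightarrow> real" and p :: "real \<Rightarrow> nat \<Rightarrow> real"
  assumes "a < H"
    and p: "\<And>t. 0 < t \<Longrightarrow> t < H \<Longrightarrow> p t \<longlonglongrightarrow> 0"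
    and bound: "\<And>n t. 1 \<le> n \<Longrightarrow> 0 \<le> t \<Longrightarrow> t - t * p t n / c \<le> X n"
  shows "\<forall>\<^sub>F n in sequentially. a < X n"
proof (cases "a < 0")
  case True
  then show ?thesis
    using bound[of _ 0] by (auto simp: eventually_sequentially intro: less_le_trans exI[of _ 1])
next
  case False
  define t where "t = (a + H) / 2"
  have t: "0 < t" "a < t" "t < H" using \<open>a < H\<close> False by (auto simp: t_def)
  have "(\<lambda>n. t - t * p t n / c) \<longlonglongrightarrow> t"
    using p[OF t(1,3)] by (cases "c = 0") (auto intro!: tendsto_eq_intros)
  then have "\<forall>\<^sub>F n in sequentially. a < t - t * p t n / c"
    using t by (intro order_tendstoD(1)) auto
  moreover have "\<forall>\<^sub>F n in sequentially. 1 \<le> n" by simp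
  ultimately show ?thesis
    by eventually_elim (use bound t in \<open>auto intro: less_le_trans\<close>)
qed

lemma tendsto_of_tail_bounds:
  fixes X :: "nat \<Rightarrow> real" and p q :: "real \<Rightarrow> nat \<Rightarrow> real" and T :: "nat \<Rightarrow> real \<Rightarrow> ennreal"
  assumes "0 < c" and "0 \<le> H"
    and "\<And>t. H < t \<Longrightarrow> p t \<longlonglongrightarrow> 0" and "\<And>t. 0 < t \<Longrightarrow> t < H \<Longrightarrow> q t \<longlonglongrightarrow> 0"
    and "\<And>e. 0 < e \<Longrightarrow> \<exists>u\<ge>0. \<forall>n\<ge>1. T n u < ennreal e"
    and "\<And>n t u. 1 \<le> n \<Longrightarrow> 0 \<le> t \<Longrightarrow> 0 \<le> u \<Longrightarrow> T n u < \<infinity> \<Longrightarrow>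
      X n \<le> t + enn2real (T n u) / c + u * p t n / c\<^sup>2"
    and "\<And>n t. 1 \<le> n \<Longrightarrow> 0 \<le> t \<Longrightarrow> t - t * q t n / c' \<le> X n"
  shows "X \<longlonglongrightarrow> H"
proof (rule order_tendstoI)
  fix a assume "H < a"
  then show "\<forall>\<^sub>F n in sequentially. X n < a"
    by (rule eventually_less_of_tail_bound[OF assms(1) _ assms(3,5,6,2)])
next
  fix a assume "a < H"
  then show "\<forall>\<^sub>F n in sequentially. a < X n"
    by (rule eventually_greater_of_lower_bound[OF _ assms(4,7)])
qed

lemma tendsto_prob_Zn_greater:
  assumes "spec_sup_cond_entropy P < ereal t"
  shows "(\<lambda>n. measure (measure_pmf (P n)) {\<omega>. t < Zn P n \<omega>}) \<longlonglongrightarrow> 0"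
proof -
  obtain \<alpha> where "\<alpha> < t" and \<alpha>: "(\<lambda>n. measure (measure_pmf (P n)) {\<omega>. \<alpha> < Zn P n \<omega>}) \<longlonglongrightarrow> 0"
    using assms by (auto simp: spec_sup_cond_entropy_def Inf_less_iff)
  show ?thesis
    using \<open>\<alpha> < t\<close>
    by (intro tendsto_sandwich[OF _ _ tendsto_const \<alpha>] always_eventually allI
        measure_pmf.finite_measure_mono) auto
qed

lemma tendsto_prob_Zn_le:
  assumes "ereal t < spec_inf_cond_entropy P"
  shows "(\<lambda>n. measure (measure_pmf (P n)) {\<omega>. Zn P n \<omega> \<le> t}) \<longlonglongrightarrow> 0"
proof -
  obtain \<beta> where "t < \<beta>" and \<beta>: "(\<lambda>n. measure (measure_pmf (P n)) {\<omega>. Zn P n \<omega> < \<beta>}) \<longlonglongrightarrow> 0"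
    using assms by (auto simp: spec_inf_cond_entropy_def less_Sup_iff)
  show ?thesis
    using \<open>t < \<beta>\<close>
    by (intro tendsto_sandwich[OF _ _ tendsto_const \<beta>] always_eventually allI
        measure_pmf.finite_measure_mono) auto
qed

lemma spec_inf_cond_entropy_nonneg: "0 \<le> spec_inf_cond_entropy P"
proof -
  have empty: "{\<omega>. Zn P n \<omega> < 0} = {}" for n using Zn_nonneg[of P n] by (auto simp: not_less)
  have "(\<lambda>n. measure (measure_pmf (P n)) {\<omega>. Zn P n \<omega> < 0}) = (\<lambda>_. 0)" by (simp only: empty) simp
  then have "ereal 0 \<in> {ereal \<beta> | \<beta>. (\<lambda>n. measure (measure_pmf (P n)) {\<omega>. Zn P n \<omega> < \<beta>}) \<longlonglongrightarrow> 0}"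
    by auto
  then show ?thesis unfolding spec_inf_cond_entropy_def zero_ereal_def by (rule Sup_upper)
qed

text \<open>Since Z_n \<le> t has vanishing probability below the spectral inf-entropy, a uniform bound
  on the normalized expectations caps it.\<close>
lemma spec_inf_cond_entropy_le:
  fixes X :: "nat \<Rightarrow> real"
  assumes lower: "\<And>n t. 1 \<le> n \<Longrightarrow> 0 \<le> t \<Longrightarrow> t - t * measure (measure_pmf (P n)) {\<omega>. Zn P n \<omega> \<le> t} \<le> X n"
    and upper: "\<And>n. 1 \<le> n \<Longrightarrow> X n \<le> K"
  shows "spec_inf_cond_entropy P \<le> ereal K"
proof -
  have below: "t \<le> K" if "0 \<le> t" and "ereal t < spec_inf_cond_entropy P" for t
  proof -
    have "(\<lambda>n. t - t * measure (measure_pmf (P n)) {\<omega>. Zn P n \<omega> \<le> t}) \<longlonglongrightarrow> t - t * 0"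
      using tendsto_prob_Zn_le[OF that(2)] by (intro tendsto_diff tendsto_mult_left) auto
    moreover have "\<forall>\<^sub>F n in sequentially. t - t * measure (measure_pmf (P n)) {\<omega>. Zn P n \<omega> \<le> t} \<le> K"
      using lower upper that(1) by (intro eventually_sequentiallyI[of 1]) (meson order.trans)
    ultimately show ?thesis by (simp add: tendsto_upperbound)
  qed
  have "0 \<le> K" using lower[of 1 0] upper[of 1] by simp
  show ?thesis
  proof (cases "spec_inf_cond_entropy P")
    case (real r)
    have "r \<le> K"
    proof (rule dense_le)
      fix t assume "t < r"
      with below[of t] \<open>0 \<le> K\<close> show "t \<le> K" by (cases "0 \<le> t") (auto simp: real)
    qed
    then show ?thesis by (simp add: real)
  next
    case PInf
    then show ?thesis using below[of "K + 1"] \<open>0 \<le> K\<close> by simp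
  next
    case MInf
    then show ?thesis using spec_inf_cond_entropy_nonneg[of P] by simp
  qed
qed

lemma uniformly_integrable_cond_info_finite:
  assumes "uniformly_integrable P" and "1 \<le> n"
  shows "(\<integral>\<^sup>+\<omega>. ennreal (cond_info (P n) \<omega>) \<partial>measure_pmf (P n)) < \<infinity>"
proof -
  obtain u where "0 \<le> u" and "Zn_tail P n u < 1"
    using uniformly_integrableD[OF assms(1), of 1] assms(2) by auto
  then show ?thesis
    using assms(2) by (intro cond_info_finite_of_Zn_tail) (auto intro: less_trans[OF _ ennreal_one_less_top])
qed

lemma uniformly_integrable_spec_inf_cond_entropy_real:
  assumes "uniformly_integrable P"
  obtains H where "spec_inf_cond_entropy P = ereal H" and "0 \<le> H"
proof -
  obtain u where "0 \<le> u" and tail_1: "\<And>n. 1 \<le> n \<Longrightarrow> Zn_tail P n u < 1"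
    using uniformly_integrableD[OF assms, of 1] by auto
  have "cond_entropy (P n) / real n \<le> 1 + u" if "1 \<le> n" for n
  proof -
    have "enn2real (Zn_tail P n u) \<le> 1" using tail_1[OF that] by (simp add: enn2real_leI less_imp_le)
    moreover have "u * measure (measure_pmf (P n)) {\<omega>. 0 < Zn P n \<omega>} \<le> u"
      using \<open>0 \<le> u\<close> by (simp add: mult_left_le)
    moreover have "Zn_tail P n u < \<infinity>"
      using tail_1[OF that] by (rule less_trans) simp
    ultimately show ?thesis
      using cond_entropy_div_le[OF that order.refl \<open>0 \<le> u\<close>, of P] by linarith
  qed
  moreover have "t - t * measure (measure_pmf (P n)) {\<omega>. Zn P n \<omega> \<le> t} \<le> cond_entropy (P n) / real n"
    if "1 \<le> n" "0 \<le> t" for n t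
    using cond_entropy_div_ge[of n t P] that uniformly_integrable_cond_info_finite[OF assms that(1)] by blast
  ultimately have "spec_inf_cond_entropy P \<le> ereal (1 + u)"
    by (intro spec_inf_cond_entropy_le)
  then show ?thesis
    using that spec_inf_cond_entropy_nonneg[of P] by (cases "spec_inf_cond_entropy P") auto
qed

theorem theorem9:
  fixes P :: "nat \<Rightarrow> ('a::countable list \<times> 'b::countable list) pmf"
    and \<epsilon> :: real
  assumes "general_source P"
    and "uniformly_integrable P"
    and "spec_inf_cond_entropy P = spec_sup_cond_entropy P"
    and "0 < \<epsilon>" and "\<epsilon> < 1"
  shows "\<exists>H::real. (\<lambda>n. cond_entropy (P n) / real n) \<longlonglongrightarrow> H
           \<and> (\<lambda>n. smooth_Hs \<epsilon> (P n) / real n) \<longlonglongrightarrow> H"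
proof -
  obtain H where H: "spec_inf_cond_entropy P = ereal H" "0 \<le> H"
    using uniformly_integrable_spec_inf_cond_entropy_real[OF assms(2)] .
  note finite = uniformly_integrable_cond_info_finite[OF assms(2)]
  note tail_small = uniformly_integrableD[OF assms(2)]
  have greater: "(\<lambda>n. measure (measure_pmf (P n)) {\<omega>. t < Zn P n \<omega>}) \<longlonglongrightarrow> 0" if "H < t" for t
    using that H assms(3) by (intro tendsto_prob_Zn_greater) simp
  have le: "(\<lambda>n. measure (measure_pmf (P n)) {\<omega>. Zn P n \<omega> \<le> t}) \<longlonglongrightarrow> 0" if "t < H" for t
    using that H by (intro tendsto_prob_Zn_le) simp
  have "(\<lambda>n. cond_entropy (P n) / real n) \<longlonglongrightarrow> H"
    by (intro tendsto_of_tail_bounds[where c=1 and c'=1, OF _ H(2) greater le tail_small])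
       (auto intro!: cond_entropy_div_le cond_entropy_div_ge finite)
  moreover have "(\<lambda>n. smooth_Hs \<epsilon> (P n) / real n) \<longlonglongrightarrow> H"
    using assms(4,5)
    by (intro tendsto_of_tail_bounds[where c=\<epsilon> and c'="1 - \<epsilon>", OF _ H(2) greater le tail_small])
       (auto intro!: smooth_Hs_div_le smooth_Hs_div_ge finite)
  ultimately show ?thesis by blast
qed

end
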